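(* For all integers $n \ge 0$ and $k \ge 0$, the word $W_n$ occurs exactly $3^k$ times as a (contiguous) subword of $W_{n+k}$. Equivalently, writing $W_{n+k}$ as the concatenation of $3^k$ copies of $W_n$ with a single letter $1$ inserted between some consecutive copies (as results from iterating $W_{m+1}=W_mW_m1W_m$), the only occurrences of $W_n$ in $W_{n+k}$ are these $3^k$ copies.
   Context: Words are finite strings over the alphabet $\{0,1\}$. Define $W_0 = 0$ and $W_{m+1} = W_m W_m 1 W_m$ (concatenation) for $m\ge 0$. An occurrence of a word $u$ in a word $v$ is a position at which $u$ appears as a contiguous block of $v$. *)

theory Defs
  imports Main
begin

fun W :: "nat \<Rightarrow> nat list" where
  "W 0 = [0]"
| "W (Suc m) = W m @ W m @ [1] @ W m"

definition occurrences :: "'a list \<Rightarrow> 'a list \<Rightarrow> nat set" where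
  "occurrences u v = {i. i + length u \<le> length v \<and> take (length u) (drop i v) = u}"

end

theory Submission
  imports Defs
begin

text \<open>Read \<open>W n\<close> as a token \<open>T\<close> and the letter \<open>1\<close> as a separator token \<open>F\<close>. Then \<open>W (n + k)\<close> is the
  token word obtained from the single token \<open>T\<close> by \<open>k\<close> rounds of the substitution
  \<open>T \<mapsto> T T F T\<close>, \<open>F \<mapsto> F\<close>, and it contains \<open>3 ^ k\<close> tokens \<open>T\<close>. By induction on \<open>n\<close>, the
  occurrences of \<open>W n\<close> in any token word are exactly the starting positions of its tokens \<open>T\<close>:
  an occurrence of \<open>W (n + 1) = W n W n 1 W n\<close> therefore sits on a factor \<open>T T F T\<close> of the
  substituted token word, and such a factor can only be the image of a single \<open>T\<close>.\<close>

lemma occurrences_singleton: "occurrences [a] xs = {i. i < length xs \<and> xs ! i = a}"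
  by (auto simp: occurrences_def take_Suc_conv_app_nth)

lemma occurrences_append_self: "length xs = i \<Longrightarrow> i \<in> occurrences u (xs @ u @ ys)"
  by (simp add: occurrences_def)

lemma occurrences_appendD:
  assumes "i \<in> occurrences (u1 @ u2) v"
  shows "i \<in> occurrences u1 v" and "i + length u1 \<in> occurrences u2 v"
proof -
  have len: "i + length u1 + length u2 \<le> length v"
    and eq: "take (length u1 + length u2) (drop i v) = u1 @ u2"
    using assms by (auto simp: occurrences_def)
  have "take (length u1 + length u2) (drop i v)
      = take (length u1) (drop i v) @ take (length u2) (drop (i + length u1) v)"
    by (simp add: take_add add.commute)
  with eq len have "take (length u1) (drop i v) = u1" "take (length u2) (drop (i + length u1) v) = u2"
    by (auto simp: append_eq_append_conv)
  with len show "i \<in> occurrences u1 v" "i + length u1 \<in> occurrences u2 v"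
    by (auto simp: occurrences_def)
qed

lemma occurrences_nth: "i \<in> occurrences u v \<Longrightarrow> p < length u \<Longrightarrow> v ! (i + p) = u ! p"
  unfolding occurrences_def by (metis (mono_tags, lifting) mem_Collect_eq nth_drop nth_take
      add_leD1 le_add_diff_inverse add_less_cancel_left)

lemma W_nonempty: "W n \<noteq> []"
  by (induction n) auto

lemma W_nth_0: "W n ! 0 = 0"
  by (induction n) (auto simp: nth_append W_nonempty)

definition token :: "nat \<Rightarrow> bool \<Rightarrow> nat list" where
  "token n b = (if b then W n else [1])"

definition render :: "nat \<Rightarrow> bool list \<Rightarrow> nat list" where
  "render n bs = concat (map (token n) bs)"

definition token_start :: "nat \<Rightarrow> bool list \<Rightarrow> nat \<Rightarrow> nat" where
  "token_start n bs j = length (render n (take j bs))"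

lemma render_simps [simp]:
  "render n [] = []"
  "render n (b # bs) = token n b @ render n bs"
  "render n (xs @ ys) = render n xs @ render n ys"
  by (simp_all add: render_def)

lemma length_token_pos: "0 < length (token n b)"
  by (simp add: token_def W_nonempty)

lemma token_nth_0: "token n b ! 0 = (if b then 0 else 1)"
  by (simp add: token_def W_nth_0)

lemma render_0: "render 0 bs = map (\<lambda>b. if b then 0 else 1) bs"
  by (induction bs) (auto simp: token_def)

lemma token_start_0: "token_start 0 bs j = min j (length bs)"
  by (simp add: token_start_def render_0)

lemma token_start_Suc:
  "j < length bs \<Longrightarrow> token_start n bs (Suc j) = token_start n bs j + length (token n (bs ! j))"
  by (simp add: token_start_def take_Suc_conv_app_nth)

lemma token_start_strict_mono:
  "j < j' \<Longrightarrow> j' \<le> length bs \<Longrightarrow> token_start n bs j < token_start n bs j'"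
proof (induction j')
  case (Suc j')
  then have "token_start n bs j \<le> token_start n bs j'"
    by (cases "j = j'") auto
  moreover have "0 < length (token n (bs ! j'))"
    by (rule length_token_pos)
  ultimately show ?case
    using Suc.prems token_start_Suc[of j' bs n] by linarith
qed simp

lemma token_start_mono:
  "j \<le> j' \<Longrightarrow> j' \<le> length bs \<Longrightarrow> token_start n bs j \<le> token_start n bs j'"
  using token_start_strict_mono[of j j' bs n] by (cases "j = j'") auto

lemma token_start_inj:
  "j \<le> length bs \<Longrightarrow> j' \<le> length bs \<Longrightarrow> token_start n bs j = token_start n bs j' \<Longrightarrow> j = j'"
  by (metis linorder_neqE_nat less_irrefl token_start_strict_mono)

lemma render_nth_token_start:
  assumes "j < length bs"
  shows "render n bs ! token_start n bs j = (if bs ! j then 0 else 1)"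
proof -
  have "render n bs = render n (take j bs) @ token n (bs ! j) @ render n (drop (Suc j) bs)"
    using assms by (metis render_simps(2,3) id_take_nth_drop)
  then show ?thesis
    using length_token_pos[of n "bs ! j"] by (simp add: token_start_def nth_append token_nth_0)
qed

fun expand :: "bool list \<Rightarrow> bool list" where
  "expand [] = []"
| "expand (b # bs) = (if b then [True, True, False, True] else [False]) @ expand bs"

lemma expand_append: "expand (xs @ ys) = expand xs @ expand ys"
  by (induction xs) auto

lemma render_expand: "render n (expand bs) = render (Suc n) bs"
  by (induction bs) (auto simp: token_def)

lemma token_start_expand:
  "token_start n (expand bs) (length (expand (take m bs))) = token_start (Suc n) bs m"
proof -
  have "take (length (expand (take m bs))) (expand bs) = expand (take m bs)"
    using expand_append[of "take m bs" "drop m bs"] by simp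
  then show ?thesis by (simp add: token_start_def render_expand)
qed

lemma length_filter_expand: "length (filter id (expand bs)) = 3 * length (filter id bs)"
  by (induction bs) auto

lemma W_add_render: "W (n + k) = render n ((expand ^^ k) [True])"
proof (induction k arbitrary: n)
  case 0
  then show ?case by (simp add: token_def)
next
  case (Suc k)
  have "W (n + Suc k) = render (Suc n) ((expand ^^ k) [True])"
    using Suc[of "Suc n"] by simp
  then show ?case by (simp add: render_expand)
qed

lemma expand_factor_TTFT:
  "j + 3 < length (expand bs) \<Longrightarrow> expand bs ! j \<Longrightarrow> expand bs ! (j + 1) \<Longrightarrow>
   \<not> expand bs ! (j + 2) \<Longrightarrow> expand bs ! (j + 3) \<Longrightarrow>
   \<exists>m < length bs. bs ! m \<and> j = length (expand (take m bs))"
proof (induction bs arbitrary: j)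
  case Nil
  then show ?case by simp
next
  case (Cons b bs)
  show ?case
  proof (cases "\<not> b \<or> 4 \<le> j")
    case True
    with Cons.prems have "length (expand [b]) \<le> j"
      by (cases j) auto
    then obtain j' where j: "j = length (expand [b]) + j'"
      using le_Suc_ex by blast
    with Cons.prems obtain m where "m < length bs" "bs ! m" "j' = length (expand (take m bs))"
      using Cons.IH[of j'] by (auto simp: nth_append add.commute add.left_commute)
    with j show ?thesis by (intro exI[of _ "Suc m"]) auto
  next
    case False
    \<comment> \<open>inside the block \<open>T T F T\<close> of \<open>b\<close>, the pattern fits only at \<open>j = 0\<close>; \<open>j = 3\<close> would need
      a block of \<open>expand bs\<close> starting with \<open>T F\<close>\<close>
    moreover have "j \<noteq> 3"
    proof
      assume "j = 3"
      with Cons.prems False have "expand bs \<noteq> []" "expand bs ! 0" "\<not> expand bs ! 1"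
        by (auto simp: nth_append)
      then show False
        by (cases bs) (auto split: if_splits)
    qed
    moreover have "j \<noteq> 1" "j \<noteq> 2"
      using Cons.prems False by auto
    ultimately have "j = 0"
      using False by arith
    with False show ?thesis by (intro exI[of _ 0]) auto
  qed
qed

lemma occurrence_W_Suc_in_render:
  assumes W_n: "occurrences (W n) (render n cs) = token_start n cs ` {j. j < length cs \<and> cs ! j}"
    and occ: "i \<in> occurrences (W (Suc n)) (render n cs)"
  shows "\<exists>j. j + 3 < length cs \<and> cs ! j \<and> cs ! (j + 1) \<and> \<not> cs ! (j + 2) \<and> cs ! (j + 3)
           \<and> i = token_start n cs j"
proof -
  let ?pos = "token_start n cs"
  define L where "L = length (W n)"
  have occ': "i \<in> occurrences (W n @ W n @ [1] @ W n) (render n cs)"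
    using occ by simp
  have occ_W1: "i \<in> occurrences (W n) (render n cs)"
    and occ_tail1: "i + L \<in> occurrences (W n @ [1] @ W n) (render n cs)"
    using occurrences_appendD[OF occ'] unfolding L_def by auto
  have occ_W2: "i + L \<in> occurrences (W n) (render n cs)"
    and occ_tail2: "i + L + L \<in> occurrences ([1] @ W n) (render n cs)"
    using occurrences_appendD[OF occ_tail1] unfolding L_def by auto
  have occ_sep: "i + L + L \<in> occurrences [1] (render n cs)"
    and occ_W3: "i + L + L + 1 \<in> occurrences (W n) (render n cs)"
    using occurrences_appendD[OF occ_tail2] by auto
  obtain j where j: "j < length cs" "cs ! j" "i = ?pos j"
    using occ_W1 W_n by auto
  obtain j1 where j1: "j1 < length cs" "cs ! j1" "i + L = ?pos j1"
    using occ_W2 W_n by auto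
  obtain j3 where j3: "j3 < length cs" "cs ! j3" "i + L + L + 1 = ?pos j3"
    using occ_W3 W_n by auto
  have "?pos (j + 1) = i + L"
    using token_start_Suc[OF j(1)] j by (simp add: token_def L_def)
  then have "j1 = j + 1"
    using j(1) j1 by (intro token_start_inj[of j1 cs "j + 1" n]) auto
  with j1 have T_j1: "j + 1 < length cs" "cs ! (j + 1)" by auto
  have p2: "?pos (j + 2) = i + L + L"
    using token_start_Suc[OF T_j1(1)] T_j1(2) \<open>?pos (j + 1) = i + L\<close> by (simp add: token_def L_def)
  have "j + 2 < j3"
  proof (rule ccontr)
    assume "\<not> j + 2 < j3"
    then have "?pos j3 \<le> ?pos (j + 2)"
      using T_j1(1) by (intro token_start_mono) auto
    with p2 j3(3) show False by linarith
  qed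
  with j3 have j2_less: "j + 2 < length cs" by simp
  have "render n cs ! (i + L + L) = 1"
    using occurrences_nth[OF occ_sep, of 0] by simp
  then have not_T_j2: "\<not> cs ! (j + 2)"
    using render_nth_token_start[OF j2_less, of n] p2 by (auto split: if_splits)
  have "?pos (j + 3) = i + L + L + 1"
    using token_start_Suc[OF j2_less] not_T_j2 p2 by (simp add: token_def numeral_3_eq_3)
  then have "j3 = j + 3"
    using j3 \<open>j + 2 < j3\<close> by (intro token_start_inj[of j3 cs "j + 3" n]) auto
  with j j3 T_j1 j2_less not_T_j2 show ?thesis by auto
qed

lemma occurrences_W_render:
  "occurrences (W n) (render n bs) = token_start n bs ` {j. j < length bs \<and> bs ! j}"
proof (induction n arbitrary: bs)
  case 0
  show ?case
    by (auto simp: render_0 token_start_0 occurrences_singleton image_iff split: if_splits)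
next
  case (Suc n)
  show ?case
  proof (intro equalityI subsetI)
    fix i assume "i \<in> occurrences (W (Suc n)) (render (Suc n) bs)"
    then have "i \<in> occurrences (W (Suc n)) (render n (expand bs))"
      by (simp add: render_expand)
    then obtain j where "j + 3 < length (expand bs)" "expand bs ! j" "expand bs ! (j + 1)"
      "\<not> expand bs ! (j + 2)" "expand bs ! (j + 3)" "i = token_start n (expand bs) j"
      using occurrence_W_Suc_in_render[OF Suc.IH] by blast
    then obtain m where "m < length bs" "bs ! m" "i = token_start (Suc n) bs m"
      using expand_factor_TTFT token_start_expand by metis
    then show "i \<in> token_start (Suc n) bs ` {j. j < length bs \<and> bs ! j}"
      by auto
  next
    fix i assume "i \<in> token_start (Suc n) bs ` {j. j < length bs \<and> bs ! j}"
    then obtain j where j: "j < length bs" "bs ! j" "i = token_start (Suc n) bs j"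
      by auto
    then have "render (Suc n) bs
        = render (Suc n) (take j bs) @ W (Suc n) @ render (Suc n) (drop (Suc j) bs)"
      by (metis render_simps(2,3) id_take_nth_drop token_def)
    then show "i \<in> occurrences (W (Suc n)) (render (Suc n) bs)"
      using occurrences_append_self j(3) by (metis token_start_def)
  qed
qed

theorem lemma1:
  fixes n k :: nat
  shows "card (occurrences (W n) (W (n + k))) = 3 ^ k"
proof -
  define cs where "cs = (expand ^^ k) [True]"
  have "inj_on (token_start n cs) {j. j < length cs \<and> cs ! j}"
    by (rule inj_onI) (simp add: token_start_inj[of _ cs _ n] less_imp_le)
  then have "card (occurrences (W n) (W (n + k))) = card {j. j < length cs \<and> cs ! j}"
    unfolding W_add_render occurrences_W_render cs_def[symmetric] by (rule card_image)
  also have "\<dots> = length (filter id cs)"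
    by (simp add: length_filter_conv_card)
  also have "\<dots> = 3 ^ k"
    unfolding cs_def by (induction k) (simp_all add: length_filter_expand[unfolded id_def])
  finally show ?thesis .
qed

end
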